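(* Let $k\ge 2$ and $n\ge 1$ be integers and let $1\le M\le kn-1$. Then the probability of selecting an item of highest rank (rank $n$) using the strategy $\mathcal{S}^+(n,k;M)$ is \[ P_{n,k}(\mathcal{S}^+(n,k;M))=\sum_{j=1}^{n-1}\sum_{l=1}^k \frac{\binom Ml(k)_l\,(k(j-1))_{M-l}}{(kn)_M}\cdot\frac 1{n-j}. \]
   Context: Fix integers $k\ge2$, $n\ge1$. There are $kn$ items, $k$ items at each of the ranks $1,2,\dots,n$ (rank $n$ is highest). The items are revealed one at a time in a uniformly random order, i.e. the sequence of ranks is a uniformly random permutation of the multiset $\{1^k,2^k,\dots,n^k\}$; $P_{n,k}$ denotes this uniform probability. For $M\in\{1,\dots,kn-1\}$, the strategy $\mathcal{S}^+(n,k;M)$ lets the first $M$ items pass and then selects the first later-arriving item whose rank is strictly greater than the highest rank among the first $M$ items (if such an item exists; otherwise nothing is selected). $P_{n,k}(\mathcal{S}^+(n,k;M))$ denotes the probability that this strategy selects an item of rank $n$. Notation: $(b)_a=b(b-1)\cdots(b-a+1)$ is the falling factorial for nonnegative integers $a,b$, with $(b)_0=1$ (so $(b)_a=0$ if $a>b$). *)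

theory Defs
  imports Complex_Main "HOL-Combinatorics.Multiset_Permutations"
begin

text \<open>Falling factorial (b)_a = b(b-1)...(b-a+1), with (b)_0 = 1 and (b)_a = 0 if a > b.\<close>
definition falling :: "nat \<Rightarrow> nat \<Rightarrow> nat" where
  "falling b a = (\<Prod>i<a. b - i)"

definition rank_mset :: "nat \<Rightarrow> nat \<Rightarrow> nat multiset" where
  "rank_mset n k = (\<Sum>r\<in>{1..n}. replicate_mset k r)"

text \<open>Strategy S+(n,k;M) applied to a sequence of ranks xs (0-indexed):
  let the first M items pass; select the first later item (index i \<ge> M) whose rank
  exceeds the maximum of the first M ranks.\<close>
definition selects_top :: "nat \<Rightarrow> nat \<Rightarrow> nat list \<Rightarrow> bool" where
  "selects_top n M xs =
     (let m = Max (set (take M xs)) in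
      \<exists>i. M \<le> i \<and> i < length xs \<and> xs ! i > m \<and>
          (\<forall>j. M \<le> j \<and> j < i \<longrightarrow> xs ! j \<le> m) \<and> xs ! i = n)"

definition prob_S_plus :: "nat \<Rightarrow> nat \<Rightarrow> nat \<Rightarrow> real" where
  "prob_S_plus n k M =
     real (card {xs \<in> permutations_of_multiset (rank_mset n k). selects_top n M xs})
     / real (card (permutations_of_multiset (rank_mset n k)))"

end

theory Submission
  imports Defs
begin

text \<open>Condition on the maximum \<open>j\<close> of the first \<open>M\<close> ranks. All of the first \<open>M\<close> items have
  rank at most \<open>j\<close> with probability \<open>(kj)\<^sub>M / (kn)\<^sub>M\<close>, so the prefix maximum equals \<open>j\<close>
  with probability \<open>((kj)\<^sub>M - (k(j-1))\<^sub>M) / (kn)\<^sub>M\<close>, and by Vandermonde's identity for falling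
  factorials this difference is the inner sum over the number \<open>l\<close> of rank-\<open>j\<close> items among the
  first \<open>M\<close>. Given the prefix maximum \<open>j\<close>, the strategy picks the first item of rank above \<open>j\<close>;
  exchanging the ranks \<open>r\<close> and \<open>n\<close> (for \<open>j < r \<le> n\<close>) throughout the sequence fixes the prefix
  and shows that the rank of this item is uniform on \<open>{j+1..n}\<close>, so it is \<open>n\<close> with
  probability \<open>1/(n-j)\<close>.\<close>

lemma falling_Suc: "falling b (Suc a) = b * falling (b - 1) a"
  unfolding falling_def by (subst prod.lessThan_Suc_shift) (simp add: diff_diff_add)

lemma falling_0 [simp]: "falling b 0 = 1"
  by (simp add: falling_def)

lemma falling_eq_binomial_fact: "falling b a = (b choose a) * fact a"
proof (induction a arbitrary: b)
  case (Suc a)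
  show ?case
  proof (cases b)
    case (Suc b')
    then have "falling b (Suc a) = Suc b' * (b' choose a) * fact a"
      by (simp add: falling_Suc Suc.IH algebra_simps)
    also have "\<dots> = (b choose Suc a) * fact (Suc a)"
      by (simp only: Suc Suc_times_binomial_eq fact_Suc of_nat_id mult.assoc)
    finally show ?thesis .
  qed (simp add: falling_def)
qed simp

lemma falling_eq_0_iff: "falling b a = 0 \<longleftrightarrow> b < a"
  by (simp add: falling_eq_binomial_fact)

lemma falling_vandermonde:
  "falling (a + b) m = (\<Sum>l\<le>m. (m choose l) * falling a l * falling b (m - l))"
proof -
  have "(m choose l) * falling a l * falling b (m - l) = fact m * ((a choose l) * (b choose (m - l)))"
    if "l \<le> m" for l
    using binomial_fact_lemma[OF that, symmetric]
    by (simp add: falling_eq_binomial_fact algebra_simps)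
  then have "(\<Sum>l\<le>m. (m choose l) * falling a l * falling b (m - l))
      = fact m * (\<Sum>l\<le>m. (a choose l) * (b choose (m - l)))"
    by (simp add: sum_distrib_left)
  also have "\<dots> = falling (a + b) m"
    by (simp add: vandermonde falling_eq_binomial_fact)
  finally show ?thesis ..
qed

lemma falling_add_split:
  "falling (a + b) m = falling b m + (\<Sum>l=1..a. (m choose l) * falling a l * falling b (m - l))"
proof -
  define t where "t l = (m choose l) * falling a l * falling b (m - l)" for l
  have "(\<Sum>l=1..m. t l) = (\<Sum>l=1..a + m. t l)" "(\<Sum>l=1..a. t l) = (\<Sum>l=1..a + m. t l)"
    by (intro sum.mono_neutral_left; auto simp: t_def falling_eq_0_iff)+
  moreover have "(\<Sum>l\<le>m. t l) = t 0 + (\<Sum>l=1..m. t l)"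
    by (simp add: atMost_atLeast0 sum.atLeast_Suc_atMost)
  moreover have "t 0 = falling b m"
    by (simp add: t_def)
  ultimately show ?thesis
    using falling_vandermonde[of a b m] by (simp add: t_def)
qed

lemma card_filter_permutations_of_multiset:
  assumes "A \<noteq> {#}"
  shows "card {xs \<in> permutations_of_multiset A. P xs} =
    (\<Sum>x\<in>set_mset A. card {ys \<in> permutations_of_multiset (A - {#x#}). P (x # ys)})"
proof -
  have "{xs \<in> permutations_of_multiset A. P xs} =
      (\<Union>x\<in>set_mset A. (#) x ` {ys \<in> permutations_of_multiset (A - {#x#}). P (x # ys)})"
    by (subst permutations_of_multiset_nonempty[OF assms]) auto
  also have "card \<dots> = (\<Sum>x\<in>set_mset A. card {ys \<in> permutations_of_multiset (A - {#x#}). P (x # ys)})"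
    by (subst card_UN_disjoint) (auto simp: card_image)
  finally show ?thesis .
qed

lemma card_permutations_of_multiset_prefix_subset:
  fixes B :: "'a multiset"
  assumes "m \<le> size B"
  shows "card {xs \<in> permutations_of_multiset B. set (take m xs) \<subseteq> U} * falling (size B) m
    = card (permutations_of_multiset B) * falling (size (filter_mset (\<lambda>x. x \<in> U) B)) m"
  using assms
proof (induction m arbitrary: B)
  case (Suc m)
  let ?T = "\<lambda>B. card (permutations_of_multiset B)"
  let ?E = "\<lambda>B. card {xs \<in> permutations_of_multiset B. set (take m xs) \<subseteq> U}"
  define c where "c = size (filter_mset (\<lambda>x. x \<in> U) B)"
  have summand: "?E (B - {#x#}) * falling (size B) (Suc m) = ?T B * falling (c - 1) m * count B x"
    if "x \<in># B" "x \<in> U" for x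
  proof -
    have "size (filter_mset (\<lambda>x. x \<in> U) (B - {#x#})) = c - 1"
      using that by (simp add: c_def size_Diff_submset)
    then have "?E (B - {#x#}) * falling (size B - 1) m = ?T (B - {#x#}) * falling (c - 1) m"
      using Suc.IH[of "B - {#x#}"] Suc.prems that by (simp add: size_Diff_submset)
    moreover have "?T B * count B x = size B * ?T (B - {#x#})"
      by (rule card_permutations_of_multiset_remove_aux) fact
    ultimately show ?thesis
      by (simp add: falling_Suc algebra_simps)
  qed
  have "B \<noteq> {#}"
    using Suc.prems by auto
  then have "card {xs \<in> permutations_of_multiset B. set (take (Suc m) xs) \<subseteq> U} * falling (size B) (Suc m)
      = (\<Sum>x\<in>{x \<in> set_mset B. x \<in> U}. ?E (B - {#x#}) * falling (size B) (Suc m))"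
    by (simp add: card_filter_permutations_of_multiset sum.inter_filter sum_distrib_right)
      (intro sum.cong; simp)
  also have "\<dots> = ?T B * falling (c - 1) m * (\<Sum>x\<in>{x \<in> set_mset B. x \<in> U}. count B x)"
    by (simp add: summand sum_distrib_left)
  also have "(\<Sum>x\<in>{x \<in> set_mset B. x \<in> U}. count B x) = c"
    by (simp add: c_def size_multiset_overloaded_eq)
  finally show ?case
    by (simp add: c_def falling_Suc)
qed simp

lemma first_exceeding_after_prefix:
  fixes xs :: "'a::linorder list"
  assumes "\<forall>x\<in>set (take M xs). x \<le> m"
  shows "(\<exists>i. M \<le> i \<and> i < length xs \<and> xs ! i > m \<and> (\<forall>j. M \<le> j \<and> j < i \<longrightarrow> xs ! j \<le> m)
            \<and> xs ! i = v)
    \<longleftrightarrow> (\<exists>x\<in>set xs. m < x) \<and> hd (filter ((<) m) xs) = v"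
proof
  assume "\<exists>i. M \<le> i \<and> i < length xs \<and> xs ! i > m \<and> (\<forall>j. M \<le> j \<and> j < i \<longrightarrow> xs ! j \<le> m)
            \<and> xs ! i = v"
  then obtain i where i: "M \<le> i" "i < length xs" "xs ! i > m" "xs ! i = v"
    and between: "\<forall>j. M \<le> j \<and> j < i \<longrightarrow> xs ! j \<le> m"
    by blast
  have "\<forall>x\<in>set (take i xs). x \<le> m"
  proof
    fix x assume "x \<in> set (take i xs)"
    then obtain j where "j < i" "x = xs ! j"
      using i(2) by (auto simp: in_set_conv_nth)
    then show "x \<le> m"
    proof (cases "j < M")
      case True
      then have "x \<in> set (take M xs)"
        using \<open>j < i\<close> \<open>x = xs ! j\<close> i(2) by (auto simp: in_set_conv_nth intro!: exI[of _ j])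
      then show ?thesis using assms by blast
    qed (use between \<open>j < i\<close> \<open>x = xs ! j\<close> in auto)
  qed
  then have "filter ((<) m) (take i xs) = []"
    by (auto simp: filter_empty_conv not_less)
  then have "filter ((<) m) xs = xs ! i # filter ((<) m) (drop (Suc i) xs)"
    by (subst (1) id_take_nth_drop[OF i(2)]) (simp add: i(3))
  then show "(\<exists>x\<in>set xs. m < x) \<and> hd (filter ((<) m) xs) = v"
    using i by (auto intro: nth_mem)
next
  assume "(\<exists>x\<in>set xs. m < x) \<and> hd (filter ((<) m) xs) = v"
  then obtain ys x zs where xs: "xs = ys @ x # zs" and "m < x" "\<forall>y\<in>set ys. \<not> m < y"
    and "hd (filter ((<) m) xs) = v"
    by (metis split_list_first_prop)
  moreover have "M \<le> length ys"
    using assms \<open>m < x\<close> by (cases "M \<le> length ys") (auto simp: xs take_Cons')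
  ultimately show "\<exists>i. M \<le> i \<and> i < length xs \<and> xs ! i > m \<and> (\<forall>j. M \<le> j \<and> j < i \<longrightarrow> xs ! j \<le> m)
            \<and> xs ! i = v"
    by (intro exI[of _ "length ys"]) (auto simp: nth_append not_less)
qed

abbreviation arrangements :: "nat \<Rightarrow> nat \<Rightarrow> nat list set" where
  "arrangements n k \<equiv> permutations_of_multiset (rank_mset n k)"

definition prefix_max :: "nat \<Rightarrow> nat list \<Rightarrow> nat" where
  "prefix_max M xs = Max (set (take M xs))"

definition first_above :: "nat \<Rightarrow> nat list \<Rightarrow> nat" where
  "first_above m xs = hd (filter ((<) m) xs)"

lemma selects_top_iff:
  "selects_top n M xs \<longleftrightarrow> (\<exists>x\<in>set xs. prefix_max M xs < x) \<and> first_above (prefix_max M xs) xs = n"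
  unfolding selects_top_def Let_def prefix_max_def first_above_def
  by (rule first_exceeding_after_prefix) simp

lemma prefix_max_eq_iff:
  assumes "take M xs \<noteq> []" "0 < j"
  shows "prefix_max M xs = j \<longleftrightarrow> set (take M xs) \<subseteq> {..j} \<and> \<not> set (take M xs) \<subseteq> {..j - 1}"
proof -
  have "j \<in> set (take M xs)" if "set (take M xs) \<subseteq> {..j}" "t \<in> set (take M xs)" "\<not> t \<le> j - 1" for t
  proof -
    have "t = j"
      using that by auto
    then show ?thesis
      using that(2) by simp
  qed
  then show ?thesis
    using assms by (auto simp: prefix_max_def Max_eq_iff subset_iff)
qed

lemma count_rank_mset: "count (rank_mset n k) x = (if x \<in> {1..n} then k else 0)"
  by (simp add: rank_mset_def count_sum)

lemma size_rank_mset [simp]: "size (rank_mset n k) = k * n"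
  by (simp add: rank_mset_def)

lemma set_mset_rank_mset: "0 < k \<Longrightarrow> set_mset (rank_mset n k) = {1..n}"
  by (simp add: rank_mset_def set_mset_sum)

lemma filter_rank_mset: "j \<le> n \<Longrightarrow> filter_mset (\<lambda>x. x \<le> j) (rank_mset n k) = rank_mset j k"
  by (intro multiset_eqI) (auto simp: count_rank_mset)

lemma image_mset_sum: "image_mset f (\<Sum>x\<in>A. g x) = (\<Sum>x\<in>A. image_mset f (g x))"
  by (induction A rule: infinite_finite_induct) auto

lemma image_mset_transpose_rank_mset:
  assumes "r \<in> {1..n}" "s \<in> {1..n}"
  shows "image_mset (Transposition.transpose r s) (rank_mset n k) = rank_mset n k"
proof -
  have "image_mset (Transposition.transpose r s) (rank_mset n k)
      = (\<Sum>x\<in>{1..n}. replicate_mset k (Transposition.transpose r s x))"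
    by (simp add: rank_mset_def image_mset_sum)
  also have "\<dots> = (\<Sum>x\<in>Transposition.transpose r s ` {1..n}. replicate_mset k x)"
    by (simp add: sum.reindex)
  also have "Transposition.transpose r s ` {1..n} = {1..n}"
    using assms by (intro transpose_image_eq) simp
  finally show ?thesis
    by (simp add: rank_mset_def)
qed

lemma set_arrangement: "xs \<in> arrangements n k \<Longrightarrow> 0 < k \<Longrightarrow> set xs = {1..n}"
  by (metis permutations_of_multisetD set_mset_mset set_mset_rank_mset)

lemma length_arrangement: "xs \<in> arrangements n k \<Longrightarrow> length xs = k * n"
  by (metis permutations_of_multisetD size_mset size_rank_mset)

lemma map_transpose_arrangement:
  fixes xs :: "nat list" and r n :: nat
  defines "\<sigma> \<equiv> Transposition.transpose r n"
  assumes xs: "xs \<in> arrangements n k" and "0 < k" "prefix_max M xs = j" "j < r" "r \<le> n"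
  shows "map \<sigma> xs \<in> arrangements n k"
    and "prefix_max M (map \<sigma> xs) = j"
    and "first_above j (map \<sigma> xs) = \<sigma> (first_above j xs)"
proof -
  have fixes_low: "\<sigma> x = x" if "x \<le> j" for x
    using that assms by (auto simp: \<sigma>_def transpose_def)
  have keeps_high: "j < \<sigma> x \<longleftrightarrow> j < x" for x
    using assms by (auto simp: \<sigma>_def transpose_def)
  show "map \<sigma> xs \<in> arrangements n k"
    using xs assms by (intro permutations_of_multisetI)
      (simp add: \<sigma>_def permutations_of_multisetD image_mset_transpose_rank_mset)
  have "\<forall>x\<in>set (take M xs). x \<le> j"
    using assms by (auto simp: prefix_max_def)
  then have "take M (map \<sigma> xs) = take M xs"
    by (simp add: take_map fixes_low map_idI)
  then show "prefix_max M (map \<sigma> xs) = j"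
    using assms by (simp add: prefix_max_def)
  have "n \<in> set (filter ((<) j) xs)"
    using set_arrangement[OF xs \<open>0 < k\<close>] assms by simp
  then have "filter ((<) j) xs \<noteq> []"
    by (metis empty_iff list.set(1))
  moreover have "filter ((<) j) (map \<sigma> xs) = map \<sigma> (filter ((<) j) xs)"
    by (simp add: filter_map comp_def keeps_high)
  ultimately show "first_above j (map \<sigma> xs) = \<sigma> (first_above j xs)"
    by (simp add: first_above_def hd_map)
qed

lemma card_first_above_eq_top:
  assumes "0 < k" "j < r" "r \<le> n"
  shows "card {xs \<in> arrangements n k. prefix_max M xs = j \<and> first_above j xs = r}
    = card {xs \<in> arrangements n k. prefix_max M xs = j \<and> first_above j xs = n}"
proof (rule bij_betw_same_card)
  let ?\<sigma> = "Transposition.transpose r n"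
  show "bij_betw (map ?\<sigma>) {xs \<in> arrangements n k. prefix_max M xs = j \<and> first_above j xs = r}
      {xs \<in> arrangements n k. prefix_max M xs = j \<and> first_above j xs = n}"
    using map_transpose_arrangement[OF _ assms(1) _ assms(2,3)]
    by (intro bij_betw_byWitness[where f' = "map ?\<sigma>"]) (auto simp: comp_def)
qed

lemma card_prefix_max_eq:
  assumes "0 < k" "j < n"
  shows "card {xs \<in> arrangements n k. prefix_max M xs = j}
    = (n - j) * card {xs \<in> arrangements n k. prefix_max M xs = j \<and> first_above j xs = n}"
proof -
  have "first_above j xs \<in> {j<..n}" if "xs \<in> arrangements n k" for xs
  proof -
    have "n \<in> set (filter ((<) j) xs)"
      using set_arrangement[OF that \<open>0 < k\<close>] assms by simp
    then have "first_above j xs \<in> set (filter ((<) j) xs)"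
      unfolding first_above_def by (metis list.set_sel(1) empty_iff list.set(1))
    then show ?thesis
      using set_arrangement[OF that \<open>0 < k\<close>] by auto
  qed
  then have "{xs \<in> arrangements n k. prefix_max M xs = j}
      = (\<Union>r\<in>{j<..n}. {xs \<in> arrangements n k. prefix_max M xs = j \<and> first_above j xs = r})"
    by blast
  then have "card {xs \<in> arrangements n k. prefix_max M xs = j}
      = (\<Sum>r\<in>{j<..n}. card {xs \<in> arrangements n k. prefix_max M xs = j \<and> first_above j xs = r})"
    by (simp only:) (rule card_UN_disjoint; auto)
  also have "\<dots> = (\<Sum>r\<in>{j<..n}. card {xs \<in> arrangements n k. prefix_max M xs = j \<and> first_above j xs = n})"
    using assms by (intro sum.cong refl card_first_above_eq_top) auto
  finally show ?thesis
    by simp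
qed

lemma real_card_prefix_le:
  assumes "j \<le> n" "M \<le> k * n"
  shows "real (card {xs \<in> arrangements n k. set (take M xs) \<subseteq> {..j}})
    = real (card (arrangements n k)) * real (falling (k * j) M) / real (falling (k * n) M)"
proof -
  have "falling (k * n) M \<noteq> 0"
    using assms(2) by (simp add: falling_eq_0_iff)
  then show ?thesis
    using card_permutations_of_multiset_prefix_subset[of M "rank_mset n k" "{..j}"] assms
    by (simp add: filter_rank_mset field_simps flip: of_nat_mult)
qed

lemma real_card_prefix_max:
  assumes "0 < k" "1 \<le> M" "M \<le> k * n" "1 \<le> j" "j \<le> n"
  shows "real (card {xs \<in> arrangements n k. prefix_max M xs = j}) / real (card (arrangements n k))
    = (real (falling (k * j) M) - real (falling (k * (j - 1)) M)) / real (falling (k * n) M)"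
proof -
  let ?E = "\<lambda>i. {xs \<in> arrangements n k. set (take M xs) \<subseteq> {..i}}"
  have "take M xs \<noteq> []" if "xs \<in> arrangements n k" for xs
    using length_arrangement[OF that] assms by auto
  then have "prefix_max M xs = j \<longleftrightarrow> xs \<in> ?E j - ?E (j - 1)" if "xs \<in> arrangements n k" for xs
    using prefix_max_eq_iff[of M xs j] that assms(4) by simp
  then have "{xs \<in> arrangements n k. prefix_max M xs = j} = ?E j - ?E (j - 1)"
    by blast
  moreover have "?E (j - 1) \<subseteq> ?E j"
    by auto
  ultimately have "real (card {xs \<in> arrangements n k. prefix_max M xs = j})
      = real (card (?E j)) - real (card (?E (j - 1)))"
    by (simp add: card_Diff_subset card_mono of_nat_diff)
  moreover have "card (arrangements n k) \<noteq> 0" "falling (k * n) M \<noteq> 0"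
    using assms(3) by (simp_all add: card_gt_0_iff falling_eq_0_iff)
  ultimately show ?thesis
    using assms by (simp add: real_card_prefix_le field_simps)
qed

lemma real_card_first_above_top:
  assumes "0 < k" "1 \<le> M" "M \<le> k * n" "1 \<le> j" "j < n"
  shows "real (card {xs \<in> arrangements n k. prefix_max M xs = j \<and> first_above j xs = n})
      / real (card (arrangements n k))
    = (\<Sum>l=1..k. real ((M choose l) * falling k l * falling (k * (j - 1)) (M - l))
        / real (falling (k * n) M) * (1 / real (n - j)))"
proof -
  have "falling (k * j) M = falling (k * (j - 1)) M
      + (\<Sum>l=1..k. (M choose l) * falling k l * falling (k * (j - 1)) (M - l))"
    using falling_add_split[of k "k * (j - 1)" M] assms(4) by (simp add: algebra_simps)
  then have diff: "real (falling (k * j) M) - real (falling (k * (j - 1)) M)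
      = (\<Sum>l=1..k. real ((M choose l) * falling k l * falling (k * (j - 1)) (M - l)))"
    by simp
  have "real (card {xs \<in> arrangements n k. prefix_max M xs = j \<and> first_above j xs = n})
      / real (card (arrangements n k))
    = real (card {xs \<in> arrangements n k. prefix_max M xs = j}) / real (card (arrangements n k))
      / real (n - j)"
    using card_prefix_max_eq[OF assms(1,5), of M] assms(5) by simp
  also have "\<dots> = (\<Sum>l=1..k. real ((M choose l) * falling k l * falling (k * (j - 1)) (M - l)))
      / real (falling (k * n) M) / real (n - j)"
    by (simp only: real_card_prefix_max[OF assms(1-4)] diff assms(5) less_imp_le)
  finally show ?thesis
    by (simp add: sum_divide_distrib)
qed

lemma selects_top_arrangements:
  assumes "0 < k" "1 \<le> M" "M \<le> k * n"
  shows "{xs \<in> arrangements n k. selects_top n M xs}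
    = (\<Union>j\<in>{1..n-1}. {xs \<in> arrangements n k. prefix_max M xs = j \<and> first_above j xs = n})"
proof -
  have "selects_top n M xs \<longleftrightarrow> (\<exists>j\<in>{1..n-1}. prefix_max M xs = j \<and> first_above j xs = n)"
    if xs: "xs \<in> arrangements n k" for xs
  proof -
    have "take M xs \<noteq> []"
      using length_arrangement[OF xs] assms by auto
    then have "prefix_max M xs \<in> set xs"
      unfolding prefix_max_def by (meson List.finite_set Max_in in_set_takeD set_empty)
    then show ?thesis
      using set_arrangement[OF xs assms(1)] by (auto simp: selects_top_iff)
  qed
  then show ?thesis
    by auto
qed

theorem proposition2:
  fixes n k M :: nat
  assumes "k \<ge> 2" and "n \<ge> 1" and "1 \<le> M" and "M \<le> k * n - 1"
  shows "prob_S_plus n k M =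
    (\<Sum>j=1..n-1. \<Sum>l=1..k.
       real ((M choose l) * falling k l * falling (k * (j - 1)) (M - l))
         / real (falling (k * n) M) * (1 / real (n - j)))"
proof -
  let ?S = "\<lambda>j. {xs \<in> arrangements n k. prefix_max M xs = j \<and> first_above j xs = n}"
  have k: "0 < k" and M: "M \<le> k * n"
    using assms by auto
  have "prob_S_plus n k M = real (card (\<Union>j\<in>{1..n-1}. ?S j)) / real (card (arrangements n k))"
    unfolding prob_S_plus_def selects_top_arrangements[OF k assms(3) M] ..
  also have "\<dots> = (\<Sum>j=1..n-1. real (card (?S j)) / real (card (arrangements n k)))"
    by (subst card_UN_disjoint) (auto simp: sum_divide_distrib)
  also have "\<dots> = (\<Sum>j=1..n-1. \<Sum>l=1..k.
       real ((M choose l) * falling k l * falling (k * (j - 1)) (M - l))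
         / real (falling (k * n) M) * (1 / real (n - j)))"
    using k assms(3) M by (intro sum.cong refl real_card_first_above_top) auto
  finally show ?thesis .
qed

end
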